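(* Linear regression in both directions, even strictly linear, does not imply that the maximal correlation equals the absolute correlation. Precisely: with $f_1,f_2,\{\rho_n\}$ and $f$ as in the context, if $0<|\rho_1|<\sup_{n\ge2}|\rho_n|$ and $(X,Y)$ has density $f$, then there are constants $a_0,a_1,b_0,b_1$ with $a_1b_1\neq0$ such that $\mathbb{E}(X\mid Y)=a_1Y+a_0$ a.s. and $\mathbb{E}(Y\mid X)=b_1X+b_0$ a.s., and yet $R(X,Y)>|\rho(X,Y)|>0$. Moreover, such sequences $\{\rho_n\}$ exist for any such $f_1,f_2$ (e.g. $\rho_n=\lambda n$ for $n=1,\dots,N$ with $N\ge2$, $\rho_n=0$ for $n>N$, and $0<\lambda\le(\sum_{n=1}^N nc_nd_n)^{-1}$).
   Context: Let $f_1,f_2$ be probability densities (w.r.t. Lebesgue measure on $\mathbb{R}$) with bounded supports, $\mathrm{supp}(f_i)\subseteq[\alpha_i,\omega_i]$, $-\infty<\alpha_i<\omega_i<\infty$ ($i=1,2$). Let $\{\phi_n\}_{n\ge0}$ be the orthonormal polynomial system in $L_2(f_1(x)dx)$ with $\deg\phi_n=n$ and leading coefficient $p_n>0$, and $\{\psi_n\}_{n\ge0}$ the orthonormal polynomial system in $L_2(f_2(y)dy)$ with $\deg\psi_n=n$ and leading coefficient $q_n>0$. Let $c_n=\sup_{\alpha_1\le x\le\omega_1}|\phi_n(x)|$ and $d_n=\sup_{\alpha_2\le y\le\omega_2}|\psi_n(y)|$ for $n\ge1$. Let $\{\rho_n\}_{n\ge1}$ be a real sequence with $\sum_{n=1}^\infty|\rho_n|c_nd_n\le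 1$. Define $f(x,y)=f_1(x)f_2(y)\bigl(1+\sum_{n=1}^\infty\rho_n\phi_n(x)\psi_n(y)\bigr)$ for $(x,y)\in[\alpha_1,\omega_1]\times[\alpha_2,\omega_2]$ and $f(x,y)=0$ otherwise; this is a bivariate probability density with marginals $f_1,f_2$. The Pearson correlation is $\rho(X,Y)=\mathrm{Cov}(X,Y)/\sqrt{\mathrm{Var}(X)\mathrm{Var}(Y)}$. For a non-degenerate random variable $W$, $L_2^*(W)$ denotes the class of measurable $g:\mathbb{R}\to\mathbb{R}$ with $0<\mathrm{Var}[g(W)]<\infty$, and the maximal correlation is $R(X,Y)=\sup_{g_1\in L_2^*(X),\,g_2\in L_2^*(Y)}\rho(g_1(X),g_2(Y))$. *)

theory Defs
  imports "HOL-Probability.Probability" "HOL-Computational_Algebra.Polynomial"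
begin

definition bdd_density :: "(real \<Rightarrow> real) \<Rightarrow> real \<Rightarrow> real \<Rightarrow> bool" where
  "bdd_density g al om \<longleftrightarrow>
     al < om \<and> g \<in> borel_measurable lborel \<and> (\<forall>x. 0 \<le> g x) \<and>
     (\<forall>x. x \<notin> {al..om} \<longrightarrow> g x = 0) \<and>
     integrable lborel g \<and> (\<integral>x. g x \<partial>lborel) = 1"

definition orthonormal_polys :: "(real \<Rightarrow> real) \<Rightarrow> (nat \<Rightarrow> real poly) \<Rightarrow> bool" where
  "orthonormal_polys g P \<longleftrightarrow>
     (\<forall>n. degree (P n) = n \<and> lead_coeff (P n) > 0) \<and>
     (\<forall>m n. integrable lborel (\<lambda>x. poly (P m) x * poly (P n) x * g x) \<and>
            (\<integral>x. poly (P m) x * poly (P n) x * g x \<partial>lborel) = (if m = n then 1 else 0))"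

definition sup_on :: "real \<Rightarrow> real \<Rightarrow> real poly \<Rightarrow> real" where
  "sup_on al om p = Sup ((\<lambda>x. \<bar>poly p x\<bar>) ` {al..om})"

text \<open>Admissible coefficient sequence: sum over n>=1 of |rho_n| c_n d_n converges and is <= 1
  (rho 0 is unused).\<close>
definition admissible ::
  "real \<Rightarrow> real \<Rightarrow> real \<Rightarrow> real \<Rightarrow> (nat \<Rightarrow> real poly) \<Rightarrow> (nat \<Rightarrow> real poly) \<Rightarrow> (nat \<Rightarrow> real) \<Rightarrow> bool" where
  "admissible al1 om1 al2 om2 P Q rho \<longleftrightarrow>
     summable (\<lambda>n. \<bar>rho (Suc n)\<bar> * sup_on al1 om1 (P (Suc n)) * sup_on al2 om2 (Q (Suc n))) \<and>
     (\<Sum>n. \<bar>rho (Suc n)\<bar> * sup_on al1 om1 (P (Suc n)) * sup_on al2 om2 (Q (Suc n))) \<le> 1"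

definition biv_density ::
  "(real \<Rightarrow> real) \<Rightarrow> (real \<Rightarrow> real) \<Rightarrow> real \<Rightarrow> real \<Rightarrow> real \<Rightarrow> real \<Rightarrow>
   (nat \<Rightarrow> real poly) \<Rightarrow> (nat \<Rightarrow> real poly) \<Rightarrow> (nat \<Rightarrow> real) \<Rightarrow> real \<Rightarrow> real \<Rightarrow> real" where
  "biv_density f1 f2 al1 om1 al2 om2 P Q rho x y =
     (if x \<in> {al1..om1} \<and> y \<in> {al2..om2}
      then f1 x * f2 y * (1 + (\<Sum>n. rho (Suc n) * poly (P (Suc n)) x * poly (Q (Suc n)) y))
      else 0)"

definition mean :: "'a measure \<Rightarrow> ('a \<Rightarrow> real) \<Rightarrow> real" where
  "mean M U = (\<integral>w. U w \<partial>M)"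

definition covar :: "'a measure \<Rightarrow> ('a \<Rightarrow> real) \<Rightarrow> ('a \<Rightarrow> real) \<Rightarrow> real" where
  "covar M U V = (\<integral>w. (U w - mean M U) * (V w - mean M V) \<partial>M)"

definition var :: "'a measure \<Rightarrow> ('a \<Rightarrow> real) \<Rightarrow> real" where
  "var M U = (\<integral>w. (U w - mean M U)\<^sup>2 \<partial>M)"

definition pcorr :: "'a measure \<Rightarrow> ('a \<Rightarrow> real) \<Rightarrow> ('a \<Rightarrow> real) \<Rightarrow> real" where
  "pcorr M U V = covar M U V / sqrt (var M U * var M V)"

text \<open>L2*(W): measurable g with 0 < Var g(W) < infinity (finiteness = square integrability).\<close>
definition L2star :: "'a measure \<Rightarrow> ('a \<Rightarrow> real) \<Rightarrow> (real \<Rightarrow> real) set" where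
  "L2star M W = {g. g \<in> borel_measurable borel \<and> integrable M (\<lambda>w. (g (W w))\<^sup>2) \<and>
                     0 < var M (\<lambda>w. g (W w))}"

definition maxcorr :: "'a measure \<Rightarrow> ('a \<Rightarrow> real) \<Rightarrow> ('a \<Rightarrow> real) \<Rightarrow> real" where
  "maxcorr M X Y = (SUP g \<in> L2star M X \<times> L2star M Y.
                      pcorr M (\<lambda>w. fst g (X w)) (\<lambda>w. snd g (Y w)))"

end

theory Submission
  imports Defs
begin

text \<open>
  Lancaster's construction: with orthonormal polynomials \<open>P\<^sub>n\<close>, \<open>Q\<^sub>n\<close> for the marginals
  \<open>f\<^sub>1\<close>, \<open>f\<^sub>2\<close>, the density \<open>f = f\<^sub>1 f\<^sub>2 (1 + \<Sum>\<^sub>n \<rho>\<^sub>n P\<^sub>n(x) Q\<^sub>n(y))\<close> makes \<open>P\<^sub>n(X)\<close>, \<open>Q\<^sub>n(Y)\<close> two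
  orthonormal systems with \<open>E[P\<^sub>j(X) Q\<^sub>k(Y)] = \<rho>\<^sub>j \<delta>\<^sub>j\<^sub>k\<close>.  Since \<open>X\<close> and \<open>Y\<close> are increasing affine
  images of \<open>P\<^sub>1(X)\<close> and \<open>Q\<^sub>1(Y)\<close>, this gives \<open>\<rho>(X, Y) = \<rho>\<^sub>1\<close> and the linear regressions
  \<open>E(X | Y) = (\<rho>\<^sub>1 Q\<^sub>1(Y) - p\<^sub>0)/p\<^sub>1\<close>, \<open>E(Y | X) = (\<rho>\<^sub>1 P\<^sub>1(X) - q\<^sub>0)/q\<^sub>1\<close>; on the other hand the pair
  \<open>(\<plusminus>P\<^sub>m, Q\<^sub>m)\<close> has correlation \<open>\<bar>\<rho>\<^sub>m\<bar>\<close>, so \<open>R(X, Y) \<ge> sup\<^sub>m \<bar>\<rho>\<^sub>m\<bar> > \<bar>\<rho>\<^sub>1\<bar>\<close>.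
\<close>

lemma mean_affine:
  assumes "prob_space M" and "integrable M U"
  shows "mean M (\<lambda>w. a * U w + b) = a * mean M U + b"
proof -
  interpret prob_space M by fact
  show ?thesis
    using assms(2) by (simp add: mean_def Bochner_Integration.integral_add prob_space)
qed

lemma pcorr_affine:
  assumes M: "prob_space M" and iU: "integrable M U" and iV: "integrable M V"
    and a: "0 < a" and c: "0 < c"
  shows "pcorr M (\<lambda>w. a * U w + b) (\<lambda>w. c * V w + d) = pcorr M U V"
proof -
  have cU: "a * U w + b - mean M (\<lambda>w. a * U w + b) = a * (U w - mean M U)" for w
    using mean_affine[OF M iU] by (simp add: algebra_simps)
  have cV: "c * V w + d - mean M (\<lambda>w. c * V w + d) = c * (V w - mean M V)" for w
    using mean_affine[OF M iV] by (simp add: algebra_simps)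
  have "covar M (\<lambda>w. a * U w + b) (\<lambda>w. c * V w + d) = (a * c) * covar M U V"
    unfolding covar_def cU cV by (simp add: mult_ac)
  moreover have "var M (\<lambda>w. a * U w + b) = a\<^sup>2 * var M U"
    unfolding var_def cU by (simp add: power_mult_distrib)
  moreover have "var M (\<lambda>w. c * V w + d) = c\<^sup>2 * var M V"
    unfolding var_def cV by (simp add: power_mult_distrib)
  moreover have "sqrt (a\<^sup>2 * var M U * (c\<^sup>2 * var M V)) = (a * c) * sqrt (var M U * var M V)"
    using a c by (simp add: real_sqrt_mult mult_ac)
  ultimately show ?thesis
    using a c unfolding pcorr_def by simp
qed

lemma pcorr_centered:
  assumes "mean M U = 0" and "mean M V = 0"
  shows "pcorr M U V = (\<integral>w. U w * V w \<partial>M) / sqrt ((\<integral>w. (U w)\<^sup>2 \<partial>M) * (\<integral>w. (V w)\<^sup>2 \<partial>M))"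
  using assms unfolding pcorr_def covar_def var_def by simp

text \<open>The product of two square-integrable functions is integrable, since
  \<open>\<bar>u v\<bar> \<le> u\<^sup>2 + v\<^sup>2\<close>.\<close>
lemma integrable_product_of_squares:
  fixes U V :: "'a \<Rightarrow> real"
  assumes [measurable]: "U \<in> borel_measurable M" "V \<in> borel_measurable M"
    and "integrable M (\<lambda>w. (U w)\<^sup>2)" "integrable M (\<lambda>w. (V w)\<^sup>2)"
  shows "integrable M (\<lambda>w. U w * V w)"
proof (rule Bochner_Integration.integrable_bound)
  show "integrable M (\<lambda>w. (U w)\<^sup>2 + (V w)\<^sup>2)" using assms(3,4) by simp
  have "\<bar>U w\<bar> * \<bar>V w\<bar> \<le> (U w)\<^sup>2 + (V w)\<^sup>2" for w
  proof -
    have "\<bar>U w\<bar> * \<bar>V w\<bar> \<le> 2 * \<bar>U w\<bar> * \<bar>V w\<bar>" by simp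
    also have "\<dots> \<le> (U w)\<^sup>2 + (V w)\<^sup>2" using sum_squares_bound[of "\<bar>U w\<bar>" "\<bar>V w\<bar>"] by simp
    finally show ?thesis .
  qed
  then show "AE w in M. norm (U w * V w) \<le> norm ((U w)\<^sup>2 + (V w)\<^sup>2)"
    by (simp add: abs_mult)
qed simp

lemma integrable_square_centered:
  fixes U :: "'a \<Rightarrow> real"
  assumes "finite_measure M" and [measurable]: "U \<in> borel_measurable M"
    and sq: "integrable M (\<lambda>w. (U w)\<^sup>2)"
  shows "integrable M (\<lambda>w. (U w - a)\<^sup>2)"
proof -
  interpret finite_measure M by fact
  have "integrable M U" by (rule square_integrable_imp_integrable[OF _ sq]) simp
  moreover have "(\<lambda>w. (U w - a)\<^sup>2) = (\<lambda>w. (U w)\<^sup>2 - 2 * a * U w + a\<^sup>2)"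
    by (simp add: power2_diff fun_eq_iff algebra_simps)
  ultimately show ?thesis using sq by simp
qed

lemma pcorr_le_1:
  fixes U V :: "'a \<Rightarrow> real"
  assumes M: "prob_space M" and [measurable]: "U \<in> borel_measurable M" "V \<in> borel_measurable M"
    and sqU: "integrable M (\<lambda>w. (U w)\<^sup>2)" and sqV: "integrable M (\<lambda>w. (V w)\<^sup>2)"
    and vU: "0 < var M U" and vV: "0 < var M V"
  shows "pcorr M U V \<le> 1"
proof -
  interpret prob_space M by fact
  define U' where "U' w = U w - mean M U" for w
  define V' where "V' w = V w - mean M V" for w
  have [measurable]: "U' \<in> borel_measurable M" "V' \<in> borel_measurable M"
    unfolding U'_def V'_def by measurable
  have iU: "integrable M (\<lambda>w. (U' w)\<^sup>2)" and iV: "integrable M (\<lambda>w. (V' w)\<^sup>2)"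
    unfolding U'_def V'_def
    by (intro integrable_square_centered[OF finite_measure_axioms] sqU sqV; simp)+
  have iUV: "integrable M (\<lambda>w. U' w * V' w)"
    by (rule integrable_product_of_squares[OF _ _ iU iV]) simp_all
  define A B C where "A = var M U" and "B = var M V" and "C = covar M U V"
  have A: "A = (\<integral>w. (U' w)\<^sup>2 \<partial>M)" and B: "B = (\<integral>w. (V' w)\<^sup>2 \<partial>M)"
    and C: "C = (\<integral>w. U' w * V' w \<partial>M)"
    unfolding A_def B_def C_def var_def covar_def U'_def V'_def by simp_all
  define s t where "s = sqrt A" and "t = sqrt B"
  have st: "0 < s" "0 < t" "s\<^sup>2 = A" "t\<^sup>2 = B"
    using vU vV unfolding s_def t_def A_def B_def by auto
  have "0 \<le> (\<integral>w. (t * U' w - s * V' w)\<^sup>2 \<partial>M)" by simp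
  also have "\<dots> = t\<^sup>2 * A - 2 * s * t * C + s\<^sup>2 * B"
  proof -
    have "(\<lambda>w. (t * U' w - s * V' w)\<^sup>2) =
        (\<lambda>w. t\<^sup>2 * (U' w)\<^sup>2 - (2 * s * t) * (U' w * V' w) + s\<^sup>2 * (V' w)\<^sup>2)"
      by (simp add: power2_diff power_mult_distrib algebra_simps)
    then show ?thesis unfolding A B C using iU iV iUV by simp
  qed
  also have "\<dots> = 2 * (s * t) * (s * t - C)"
    by (simp add: st(3,4)[symmetric] power2_eq_square algebra_simps)
  finally have "C \<le> s * t"
    using mult_pos_pos[OF st(1,2)] by (simp add: zero_le_mult_iff)
  moreover have "sqrt (A * B) = s * t" unfolding s_def t_def by (simp add: real_sqrt_mult)
  ultimately show ?thesis
    using st unfolding pcorr_def A_def[symmetric] B_def[symmetric] C_def[symmetric]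
    by (simp add: divide_le_eq_1)
qed

text \<open>The maximal correlation dominates the correlation of every pair in
  \<open>L\<^sub>2\<^sup>*(X) \<times> L\<^sub>2\<^sup>*(Y)\<close>; the supremum is finite by Cauchy--Schwarz.\<close>
lemma pcorr_le_maxcorr:
  assumes M: "prob_space M" and Xm: "X \<in> borel_measurable M" and Ym: "Y \<in> borel_measurable M"
    and g: "g \<in> L2star M X \<times> L2star M Y"
  shows "pcorr M (\<lambda>w. fst g (X w)) (\<lambda>w. snd g (Y w)) \<le> maxcorr M X Y"
proof -
  have "bdd_above ((\<lambda>g. pcorr M (\<lambda>w. fst g (X w)) (\<lambda>w. snd g (Y w))) ` (L2star M X \<times> L2star M Y))"
  proof (rule bdd_aboveI2)
    fix h assume "h \<in> L2star M X \<times> L2star M Y"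
    then have hm: "fst h \<in> borel_measurable borel" "snd h \<in> borel_measurable borel"
      and L2: "integrable M (\<lambda>w. (fst h (X w))\<^sup>2)" "integrable M (\<lambda>w. (snd h (Y w))\<^sup>2)"
        "0 < var M (\<lambda>w. fst h (X w))" "0 < var M (\<lambda>w. snd h (Y w))"
      unfolding L2star_def by auto
    show "pcorr M (\<lambda>w. fst h (X w)) (\<lambda>w. snd h (Y w)) \<le> 1"
      by (rule pcorr_le_1[OF M measurable_compose[OF Xm hm(1)] measurable_compose[OF Ym hm(2)] L2])
  qed
  from cSUP_upper[OF g this] show ?thesis unfolding maxcorr_def .
qed

lemma real_cond_exp_by_test_sets:
  fixes X Y :: "'a \<Rightarrow> real" and h :: "real \<Rightarrow> real"
  assumes M: "prob_space M" and Ym: "Y \<in> borel_measurable M"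
    and hm: "h \<in> borel_measurable borel"
    and iX: "integrable M X" and ih: "integrable M (\<lambda>w. h (Y w))"
    and tests: "\<And>B. B \<in> sets borel \<Longrightarrow>
      (\<integral>w. X w * indicator B (Y w) \<partial>M) = (\<integral>w. h (Y w) * indicator B (Y w) \<partial>M)"
  shows "AE w in M. real_cond_exp M (vimage_algebra (space M) Y borel) X w = h (Y w)"
proof -
  interpret prob_space M by fact
  define F where "F = vimage_algebra (space M) Y borel"
  have sF: "sets F = {Y -` B \<inter> space M | B. B \<in> sets borel}"
    unfolding F_def by (rule sets_vimage_algebra2) simp
  have "subalgebra M F"
    unfolding subalgebra_def using sF measurable_sets[OF Ym] by (auto simp: F_def)
  then interpret S: finite_measure_subalgebra M F
    by (intro finite_measure_subalgebra.intro finite_measure_subalgebra_axioms.intro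
        finite_measure_axioms)
  have "Y \<in> borel_measurable F" unfolding F_def by (rule measurable_vimage_algebra1) simp
  from measurable_compose[OF this hm] have hY: "(\<lambda>w. h (Y w)) \<in> borel_measurable F" .
  have "(\<integral>w\<in>A. X w \<partial>M) = (\<integral>w\<in>A. h (Y w) \<partial>M)" if "A \<in> sets F" for A
  proof -
    from that obtain B where B: "B \<in> sets borel" and A: "A = Y -` B \<inter> space M"
      unfolding sF by auto
    have "(\<integral>w\<in>A. g w \<partial>M) = (\<integral>w. g w * indicator B (Y w) \<partial>M)" for g :: "'a \<Rightarrow> real"
      unfolding set_lebesgue_integral_def
      by (intro Bochner_Integration.integral_cong) (simp_all add: A indicator_def)
    with tests[OF B] show ?thesis by simp
  qed
  from S.real_cond_exp_charact[OF this iX ih hY] show ?thesis unfolding F_def .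
qed

lemma borel_measurable_poly [measurable]: "(\<lambda>x. poly p x :: real) \<in> borel_measurable borel"
  by (intro borel_measurable_continuous_onI continuous_on_poly continuous_on_id)

lemma sup_on_ge:
  assumes "x \<in> {al..om}"
  shows "\<bar>poly p x\<bar> \<le> sup_on al om p"
proof -
  have "compact ((\<lambda>x. \<bar>poly p x\<bar>) ` {al..om})"
    by (intro compact_continuous_image continuous_intros) auto
  then have "bdd_above ((\<lambda>x. \<bar>poly p x\<bar>) ` {al..om})"
    by (intro bounded_imp_bdd_above compact_imp_bounded)
  then show ?thesis unfolding sup_on_def using assms by (intro cSup_upper) auto
qed

lemma sup_on_nonneg: "al \<le> om \<Longrightarrow> 0 \<le> sup_on al om p"
  using sup_on_ge[of al al om p] by (meson abs_ge_zero atLeastAtMost_iff order.trans order_refl)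

lemma bdd_densityD:
  assumes "bdd_density g al om"
  shows "al < om" "g \<in> borel_measurable borel" "\<And>x. 0 \<le> g x" "\<And>x. x \<notin> {al..om} \<Longrightarrow> g x = 0"
    "integrable lborel g" "(\<integral>x. g x \<partial>lborel) = 1"
  using assms unfolding bdd_density_def by auto

lemma bounded_times_density:
  assumes d: "bdd_density g al om" and um[measurable]: "u \<in> borel_measurable borel"
    and ub: "\<And>x. x \<in> {al..om} \<Longrightarrow> \<bar>u x\<bar> \<le> C"
  shows "integrable lborel (\<lambda>x. g x * u x)"
    and "\<bar>g x * u x\<bar> \<le> C * g x"
    and "(\<integral>x. \<bar>g x * u x\<bar> \<partial>lborel) \<le> C"
proof -
  note D = bdd_densityD[OF d]
  have [measurable]: "g \<in> borel_measurable borel" by (rule D(2))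
  have bound: "\<bar>g x * u x\<bar> \<le> C * g x" for x
  proof (cases "x \<in> {al..om}")
    case True
    then show ?thesis using mult_left_mono[OF ub[OF True] D(3)[of x]] D(3)[of x]
      by (simp add: abs_mult mult.commute)
  qed (simp add: D(4))
  then show "\<bar>g x * u x\<bar> \<le> C * g x" .
  have C0: "0 \<le> C" using ub[of al] D(1) by auto
  show int: "integrable lborel (\<lambda>x. g x * u x)"
    by (rule Bochner_Integration.integrable_bound[of lborel "\<lambda>x. C * g x"])
       (use D(3,5) bound C0 in auto)
  have "(\<integral>x. \<bar>g x * u x\<bar> \<partial>lborel) \<le> (\<integral>x. C * g x \<partial>lborel)"
    by (rule integral_mono) (use int D(5) bound in auto)
  then show "(\<integral>x. \<bar>g x * u x\<bar> \<partial>lborel) \<le> C" using D(6) by simp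
qed

lemma orthonormal_polysD:
  assumes "orthonormal_polys g P"
  shows "integrable lborel (\<lambda>x. g x * (poly (P m) x * poly (P n) x))"
    and "(\<integral>x. g x * (poly (P m) x * poly (P n) x) \<partial>lborel) = (if m = n then 1 else 0)"
    and "degree (P n) = n" and "lead_coeff (P n) > 0"
proof -
  show "integrable lborel (\<lambda>x. g x * (poly (P m) x * poly (P n) x))"
    and "(\<integral>x. g x * (poly (P m) x * poly (P n) x) \<partial>lborel) = (if m = n then 1 else 0)"
    using assms unfolding orthonormal_polys_def by (simp_all add: mult_ac)
  show "degree (P n) = n" and "lead_coeff (P n) > 0"
    using assms unfolding orthonormal_polys_def by blast+
qed

lemma orthonormal_poly_0:
  assumes o: "orthonormal_polys g P" and d: "bdd_density g al om"
  shows "poly (P 0) x = 1"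
proof -
  obtain c where c: "P 0 = [:c:]" using orthonormal_polysD(3)[OF o, of 0] by (metis degree_eq_zeroE)
  have "0 < c" using orthonormal_polysD(4)[OF o, of 0] by (simp add: c)
  moreover have "c * c = 1"
    using orthonormal_polysD(2)[OF o, of 0 0] bdd_densityD(6)[OF d] by (simp add: c mult_ac)
  then have "(c - 1) * (c + 1) = 0" by (simp add: algebra_simps)
  ultimately have "c = 1" by auto
  then show ?thesis by (simp add: c)
qed

lemma orthonormal_poly_1:
  assumes "orthonormal_polys g P"
  shows "poly (P 1) x = coeff (P 1) 0 + coeff (P 1) 1 * x" and "coeff (P 1) 1 > 0"
  using orthonormal_polysD(3,4)[OF assms, of 1] by (simp_all add: poly_altdef)

lemma orthonormal_sup_ge_1:
  assumes o: "orthonormal_polys g P" and d: "bdd_density g al om"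
  shows "1 \<le> sup_on al om (P n)"
proof -
  note D = bdd_densityD[OF d]
  define c where "c = sup_on al om (P n)"
  have c0: "0 \<le> c" unfolding c_def using sup_on_nonneg D(1) by (simp add: less_imp_le)
  have "g x * (poly (P n) x * poly (P n) x) \<le> c\<^sup>2 * g x" for x
  proof (cases "x \<in> {al..om}")
    case True
    have "poly (P n) x * poly (P n) x \<le> c\<^sup>2"
      using power_mono[OF sup_on_ge[OF True, of "P n"] abs_ge_zero, of 2]
      by (simp add: c_def power2_eq_square)
    then show ?thesis using D(3)[of x] by (simp add: mult_left_mono mult.commute)
  qed (simp add: D(4))
  then have "(\<integral>x. g x * (poly (P n) x * poly (P n) x) \<partial>lborel) \<le> (\<integral>x. c\<^sup>2 * g x \<partial>lborel)"
    by (intro integral_mono orthonormal_polysD(1)[OF o]) (use D(5) in auto)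
  then have "1 \<le> c\<^sup>2" using orthonormal_polysD(2)[OF o, of n n] D(6) by simp
  then show ?thesis unfolding c_def[symmetric] using power2_le_imp_le[of 1 c] c0 by simp
qed

context pair_sigma_finite
begin

lemma integral_tensor:
  fixes a :: "'a \<Rightarrow> real" and b :: "'b \<Rightarrow> real"
  assumes ia: "integrable M1 a" and ib: "integrable M2 b"
  shows "integrable (M1 \<Otimes>\<^sub>M M2) (\<lambda>z. a (fst z) * b (snd z))"
    and "(\<integral>z. a (fst z) * b (snd z) \<partial>(M1 \<Otimes>\<^sub>M M2)) = (\<integral>x. a x \<partial>M1) * (\<integral>y. b y \<partial>M2)"
proof -
  show int: "integrable (M1 \<Otimes>\<^sub>M M2) (\<lambda>z. a (fst z) * b (snd z))"
  proof (rule Fubini_integrable)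
    have "integrable M1 (\<lambda>x. \<bar>a x\<bar> * (\<integral>y. \<bar>b y\<bar> \<partial>M2))" using ia by auto
    then show "integrable M1 (\<lambda>x. \<integral>y. norm (a (fst (x, y)) * b (snd (x, y))) \<partial>M2)"
      by (simp add: abs_mult)
    show "AE x in M1. integrable M2 (\<lambda>y. a (fst (x, y)) * b (snd (x, y)))"
      using ib by simp
    show "(\<lambda>z. a (fst z) * b (snd z)) \<in> borel_measurable (M1 \<Otimes>\<^sub>M M2)"
      using measurable_compose[OF measurable_fst ia[THEN borel_measurable_integrable]]
        measurable_compose[OF measurable_snd ib[THEN borel_measurable_integrable]]
      by (rule borel_measurable_times)
  qed
  have "(\<integral>z. a (fst z) * b (snd z) \<partial>(M1 \<Otimes>\<^sub>M M2)) = (\<integral>x. (\<integral>y. a x * b y \<partial>M2) \<partial>M1)"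
    using integral_fst'[OF int] by simp
  then show "(\<integral>z. a (fst z) * b (snd z) \<partial>(M1 \<Otimes>\<^sub>M M2)) = (\<integral>x. a x \<partial>M1) * (\<integral>y. b y \<partial>M2)"
    by simp
qed

lemma integral_suminf_tensor:
  fixes a :: "nat \<Rightarrow> 'a \<Rightarrow> real" and b :: "nat \<Rightarrow> 'b \<Rightarrow> real"
  assumes ia: "\<And>n. integrable M1 (a n)" and ib: "\<And>n. integrable M2 (b n)"
    and pointwise: "\<And>x y. summable (\<lambda>n. \<bar>a n x * b n y\<bar>)"
    and dominated: "summable (\<lambda>n. (\<integral>x. \<bar>a n x\<bar> \<partial>M1) * (\<integral>y. \<bar>b n y\<bar> \<partial>M2))"
  shows "integrable (M1 \<Otimes>\<^sub>M M2) (\<lambda>z. \<Sum>n. a n (fst z) * b n (snd z))"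
    and "(\<integral>z. (\<Sum>n. a n (fst z) * b n (snd z)) \<partial>(M1 \<Otimes>\<^sub>M M2)) =
      (\<Sum>n. (\<integral>x. a n x \<partial>M1) * (\<integral>y. b n y \<partial>M2))"
proof -
  let ?t = "\<lambda>n z. a n (fst z) * b n (snd z)"
  have it: "integrable (M1 \<Otimes>\<^sub>M M2) (?t n)" for n by (rule integral_tensor(1)[OF ia ib])
  have "(\<integral>z. norm (?t n z) \<partial>(M1 \<Otimes>\<^sub>M M2)) = (\<integral>x. \<bar>a n x\<bar> \<partial>M1) * (\<integral>y. \<bar>b n y\<bar> \<partial>M2)" for n
    using integral_tensor(2)[of "\<lambda>x. \<bar>a n x\<bar>" "\<lambda>y. \<bar>b n y\<bar>"] ia ib by (simp add: abs_mult)
  then have sn: "summable (\<lambda>n. \<integral>z. norm (?t n z) \<partial>(M1 \<Otimes>\<^sub>M M2))" using dominated by simp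
  have ae: "AE z in M1 \<Otimes>\<^sub>M M2. summable (\<lambda>n. norm (?t n z))" using pointwise by simp
  show "integrable (M1 \<Otimes>\<^sub>M M2) (\<lambda>z. \<Sum>n. ?t n z)" by (rule integrable_suminf[OF it ae sn])
  have "(\<integral>z. (\<Sum>n. ?t n z) \<partial>(M1 \<Otimes>\<^sub>M M2)) = (\<Sum>n. \<integral>z. ?t n z \<partial>(M1 \<Otimes>\<^sub>M M2))"
    by (rule integral_suminf[OF it ae sn])
  then show "(\<integral>z. (\<Sum>n. ?t n z) \<partial>(M1 \<Otimes>\<^sub>M M2)) = (\<Sum>n. (\<integral>x. a n x \<partial>M1) * (\<integral>y. b n y \<partial>M2))"
    using integral_tensor(2)[OF ia ib] by simp
qed

end

text \<open>Coefficients of the Lancaster expansion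
  \<open>1 + \<Sum>\<^sub>n\<^sub>\<ge>\<^sub>1 \<rho>\<^sub>n P\<^sub>n(x) Q\<^sub>n(y) = \<Sum>\<^sub>n\<^sub>\<ge>\<^sub>0 r\<^sub>n P\<^sub>n(x) Q\<^sub>n(y)\<close>: the constant term is absorbed
  as \<open>r\<^sub>0 = 1\<close>, using \<open>P\<^sub>0 = Q\<^sub>0 = 1\<close>.\<close>
definition lancaster_coeff :: "(nat \<Rightarrow> real) \<Rightarrow> nat \<Rightarrow> real" where
  "lancaster_coeff rho n = (if n = 0 then 1 else rho n)"

lemma poly_times_bounded:
  assumes "x \<in> {al..om}" and "\<bar>t\<bar> \<le> C"
  shows "\<bar>poly p x * t\<bar> \<le> sup_on al om p * C"
  unfolding abs_mult using assms sup_on_ge[OF assms(1)] sup_on_nonneg[of al om p]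
  by (intro mult_mono) auto

lemma density_poly_times_bounded:
  assumes d: "bdd_density g al om" and um: "u \<in> borel_measurable borel"
    and ub: "\<And>x. x \<in> {al..om} \<Longrightarrow> \<bar>u x\<bar> \<le> C"
  shows "integrable lborel (\<lambda>x. g x * (poly p x * u x))"
    and "\<bar>g x * (poly p x * u x)\<bar> \<le> sup_on al om p * C * g x"
    and "(\<integral>x. \<bar>g x * (poly p x * u x)\<bar> \<partial>lborel) \<le> sup_on al om p * C"
proof -
  have "\<bar>poly p x * u x\<bar> \<le> sup_on al om p * C" if "x \<in> {al..om}" for x
    by (rule poly_times_bounded[OF that ub[OF that]])
  note bound = bounded_times_density[OF d borel_measurable_times[OF borel_measurable_poly um] this]
  show "integrable lborel (\<lambda>x. g x * (poly p x * u x))" by (rule bound(1))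
  show "\<bar>g x * (poly p x * u x)\<bar> \<le> sup_on al om p * C * g x" by (rule bound(2))
  show "(\<integral>x. \<bar>g x * (poly p x * u x)\<bar> \<partial>lborel) \<le> sup_on al om p * C" by (rule bound(3))
qed

lemma biv_density_swap:
  "biv_density f2 f1 al2 om2 al1 om1 Q P rho y x = biv_density f1 f2 al1 om1 al2 om2 P Q rho x y"
  unfolding biv_density_def by (simp add: mult_ac conj_commute)

locale lancaster_model =
  fixes f1 f2 :: "real \<Rightarrow> real" and al1 om1 al2 om2 :: real
    and P Q :: "nat \<Rightarrow> real poly" and rho :: "nat \<Rightarrow> real"
  assumes d1: "bdd_density f1 al1 om1" and d2: "bdd_density f2 al2 om2"
    and o1: "orthonormal_polys f1 P" and o2: "orthonormal_polys f2 Q"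
    and adm: "admissible al1 om1 al2 om2 P Q rho"
begin

lemma swap: "lancaster_model f2 f1 al2 om2 al1 om1 Q P rho"
  using d1 d2 o1 o2 adm unfolding lancaster_model_def admissible_def by (simp add: mult_ac)

abbreviation weight :: "nat \<Rightarrow> real" where
  "weight n \<equiv> \<bar>lancaster_coeff rho n\<bar> * sup_on al1 om1 (P n) * sup_on al2 om2 (Q n)"

lemma weight_nonneg: "0 \<le> weight n"
  using sup_on_nonneg[of al1 om1] sup_on_nonneg[of al2 om2] bdd_densityD(1)[OF d1] bdd_densityD(1)[OF d2]
  by (simp add: less_imp_le)

lemma weight_tail: "summable (\<lambda>n. weight (Suc n))" "(\<Sum>n. weight (Suc n)) \<le> 1"
  using adm by (simp_all add: admissible_def lancaster_coeff_def)

lemma weight_summable: "summable weight"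
  using weight_tail(1) summable_Suc_iff by blast

lemma weight_bound:
  assumes "x \<in> {al1..om1}" "y \<in> {al2..om2}"
  shows "\<bar>lancaster_coeff rho n * poly (P n) x * poly (Q n) y\<bar> \<le> weight n"
proof -
  have "\<bar>poly (P n) x * poly (Q n) y\<bar> \<le> sup_on al1 om1 (P n) * sup_on al2 om2 (Q n)"
    using poly_times_bounded[OF assms(1) sup_on_ge[OF assms(2)]] .
  then have "\<bar>lancaster_coeff rho n\<bar> * \<bar>poly (P n) x * poly (Q n) y\<bar>
      \<le> \<bar>lancaster_coeff rho n\<bar> * (sup_on al1 om1 (P n) * sup_on al2 om2 (Q n))"
    by (rule mult_left_mono) simp
  then show ?thesis by (simp only: abs_mult mult.assoc)
qed

lemma lancaster_summable:
  assumes "x \<in> {al1..om1}" "y \<in> {al2..om2}"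
  shows "summable (\<lambda>n. \<bar>lancaster_coeff rho n * poly (P n) x * poly (Q n) y\<bar>)"
  by (rule summable_comparison_test'[OF weight_summable]) (use weight_bound[OF assms] in simp)

text \<open>Each \<open>\<rho>\<^sub>n\<close> is a correlation coefficient: \<open>\<bar>\<rho>\<^sub>n\<bar> \<le> 1\<close>, since \<open>c\<^sub>n, d\<^sub>n \<ge> 1\<close>.\<close>
lemma rho_bound: "\<bar>rho (Suc n)\<bar> \<le> 1"
proof -
  have c: "1 \<le> sup_on al1 om1 (P (Suc n))" and d: "1 \<le> sup_on al2 om2 (Q (Suc n))"
    using orthonormal_sup_ge_1[OF o1 d1] orthonormal_sup_ge_1[OF o2 d2] by blast+
  have "\<bar>rho (Suc n)\<bar> * 1 * 1 \<le> weight (Suc n)"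
    unfolding lancaster_coeff_def using c d
    by (intro mult_mono mult_left_mono) (auto intro: mult_nonneg_nonneg order_trans[OF zero_le_one])
  also have "\<dots> \<le> (\<Sum>n. weight (Suc n))"
    using sum_le_suminf[OF weight_tail(1), of "{n}"] weight_nonneg by simp
  finally show ?thesis using weight_tail(2) by simp
qed

lemma lancaster_series:
  assumes xy: "x \<in> {al1..om1}" "y \<in> {al2..om2}"
  shows "summable (\<lambda>n. lancaster_coeff rho n * poly (P n) x * poly (Q n) y)"
    and "(\<Sum>n. lancaster_coeff rho n * poly (P n) x * poly (Q n) y) =
      1 + (\<Sum>n. rho (Suc n) * poly (P (Suc n)) x * poly (Q (Suc n)) y)"
    and "\<bar>\<Sum>n. rho (Suc n) * poly (P (Suc n)) x * poly (Q (Suc n)) y\<bar> \<le> 1"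
proof -
  let ?s = "\<lambda>n. lancaster_coeff rho n * poly (P n) x * poly (Q n) y"
  have abs_s: "summable (\<lambda>n. \<bar>?s n\<bar>)" by (rule lancaster_summable[OF xy])
  then show s: "summable ?s" by (rule summable_rabs_cancel)
  have s0: "?s 0 = 1"
    by (simp add: lancaster_coeff_def orthonormal_poly_0[OF o1 d1] orthonormal_poly_0[OF o2 d2])
  have tail: "?s (Suc n) = rho (Suc n) * poly (P (Suc n)) x * poly (Q (Suc n)) y" for n
    by (simp add: lancaster_coeff_def)
  show "(\<Sum>n. lancaster_coeff rho n * poly (P n) x * poly (Q n) y) =
      1 + (\<Sum>n. rho (Suc n) * poly (P (Suc n)) x * poly (Q (Suc n)) y)"
    using suminf_split_head[OF s] unfolding tail s0 by simp
  have abs_tail: "summable (\<lambda>n. \<bar>?s (Suc n)\<bar>)" by (rule summable_Suc_iff[THEN iffD2, OF abs_s])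
  have "\<bar>\<Sum>n. ?s (Suc n)\<bar> \<le> (\<Sum>n. \<bar>?s (Suc n)\<bar>)" by (rule summable_rabs[OF abs_tail])
  also have "\<dots> \<le> (\<Sum>n. weight (Suc n))"
    by (rule suminf_le[OF weight_bound[OF xy] abs_tail weight_tail(1)])
  finally show "\<bar>\<Sum>n. rho (Suc n) * poly (P (Suc n)) x * poly (Q (Suc n)) y\<bar> \<le> 1"
    using weight_tail(2) unfolding tail by linarith
qed

lemma biv_density_series:
  "biv_density f1 f2 al1 om1 al2 om2 P Q rho x y =
     f1 x * f2 y * (\<Sum>n. lancaster_coeff rho n * poly (P n) x * poly (Q n) y)"
proof (cases "x \<in> {al1..om1} \<and> y \<in> {al2..om2}")
  case True
  then show ?thesis unfolding biv_density_def using lancaster_series(2)[of x y] by simp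
next
  case False
  then have "f1 x * f2 y = 0" using bdd_densityD(4)[OF d1] bdd_densityD(4)[OF d2] by auto
  then show ?thesis using False unfolding biv_density_def by simp
qed

text \<open>Admissibility makes \<open>f\<close> nonnegative, as \<open>\<bar>\<Sum>\<^sub>n\<^sub>\<ge>\<^sub>1 \<rho>\<^sub>n P\<^sub>n Q\<^sub>n\<bar> \<le> 1\<close>.\<close>
lemma biv_density_nonneg: "0 \<le> biv_density f1 f2 al1 om1 al2 om2 P Q rho x y"
proof (cases "x \<in> {al1..om1} \<and> y \<in> {al2..om2}")
  case True
  then have "0 \<le> 1 + (\<Sum>n. rho (Suc n) * poly (P (Suc n)) x * poly (Q (Suc n)) y)"
    using lancaster_series(3)[of x y] by linarith
  moreover have "0 \<le> f1 x * f2 y" using bdd_densityD(3)[OF d1] bdd_densityD(3)[OF d2] by simp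
  ultimately show ?thesis using True unfolding biv_density_def by simp
qed (auto simp: biv_density_def)

text \<open>Multiplying the density by \<open>u(x) v(y)\<close> gives a series of products of one-variable
  functions (the vanishing of \<open>f\<^sub>1 f\<^sub>2\<close> off the rectangle makes this hold everywhere).\<close>
lemma biv_density_times_product:
  "biv_density f1 f2 al1 om1 al2 om2 P Q rho x y * (u x * v y) =
    (\<Sum>n. (lancaster_coeff rho n * (f1 x * (poly (P n) x * u x))) * (f2 y * (poly (Q n) y * v y)))"
proof -
  let ?s = "\<lambda>n. lancaster_coeff rho n * poly (P n) x * poly (Q n) y"
  have factored: "(lancaster_coeff rho n * (f1 x * (poly (P n) x * u x))) * (f2 y * (poly (Q n) y * v y))
      = (f1 x * f2 y * (u x * v y)) * ?s n" for n
    by (simp add: mult_ac)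
  show ?thesis
  proof (cases "x \<in> {al1..om1} \<and> y \<in> {al2..om2}")
    case True
    then show ?thesis
      using suminf_mult[OF lancaster_series(1), of x y "f1 x * f2 y * (u x * v y)"]
      by (simp add: biv_density_series factored mult_ac)
  next
    case False
    then have "f1 x * f2 y = 0" using bdd_densityD(4)[OF d1] bdd_densityD(4)[OF d2] by auto
    then show ?thesis by (auto simp: biv_density_series factored)
  qed
qed

lemma product_series_dominated:
  assumes um: "u \<in> borel_measurable borel" and vm: "v \<in> borel_measurable borel"
    and ub: "\<And>x. x \<in> {al1..om1} \<Longrightarrow> \<bar>u x\<bar> \<le> Cu"
    and vb: "\<And>y. y \<in> {al2..om2} \<Longrightarrow> \<bar>v y\<bar> \<le> Cv"
  defines "a n x \<equiv> lancaster_coeff rho n * (f1 x * (poly (P n) x * u x))"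
    and "b n y \<equiv> f2 y * (poly (Q n) y * v y)"
  shows "summable (\<lambda>n. \<bar>a n x * b n y\<bar>)"
    and "summable (\<lambda>n. (\<integral>x. \<bar>a n x\<bar> \<partial>lborel) * (\<integral>y. \<bar>b n y\<bar> \<partial>lborel))"
proof -
  note A = density_poly_times_bounded[OF d1 um ub] and B = density_poly_times_bounded[OF d2 vm vb]
  have "\<bar>a n x * b n y\<bar> \<le> weight n * (Cu * Cv * f1 x * f2 y)" for n
  proof -
    have "\<bar>a n x * b n y\<bar> = \<bar>lancaster_coeff rho n\<bar> *
        (\<bar>f1 x * (poly (P n) x * u x)\<bar> * \<bar>f2 y * (poly (Q n) y * v y)\<bar>)"
      by (simp add: a_def b_def abs_mult)
    also have "\<dots> \<le> \<bar>lancaster_coeff rho n\<bar> *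
        ((sup_on al1 om1 (P n) * Cu * f1 x) * (sup_on al2 om2 (Q n) * Cv * f2 y))"
      by (intro mult_left_mono mult_mono A(2) B(2)) (auto intro: order_trans[OF abs_ge_zero A(2)])
    finally show ?thesis by (simp add: mult_ac)
  qed
  then show "summable (\<lambda>n. \<bar>a n x * b n y\<bar>)"
    by (intro summable_comparison_test'[OF summable_mult2[OF weight_summable]]) auto
  have "(\<integral>x. \<bar>a n x\<bar> \<partial>lborel) * (\<integral>y. \<bar>b n y\<bar> \<partial>lborel) \<le> weight n * (Cu * Cv)" for n
  proof -
    have "(\<integral>x. \<bar>a n x\<bar> \<partial>lborel) = \<bar>lancaster_coeff rho n\<bar> * (\<integral>x. \<bar>f1 x * (poly (P n) x * u x)\<bar> \<partial>lborel)"
      by (simp add: a_def abs_mult)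
    also have "\<dots> \<le> \<bar>lancaster_coeff rho n\<bar> * (sup_on al1 om1 (P n) * Cu)"
      by (rule mult_left_mono[OF A(3) abs_ge_zero])
    finally have "(\<integral>x. \<bar>a n x\<bar> \<partial>lborel) \<le> \<bar>lancaster_coeff rho n\<bar> * (sup_on al1 om1 (P n) * Cu)" .
    moreover have "0 \<le> (\<integral>x. \<bar>a n x\<bar> \<partial>lborel)" by (rule Bochner_Integration.integral_nonneg) simp
    moreover have "(\<integral>y. \<bar>b n y\<bar> \<partial>lborel) \<le> sup_on al2 om2 (Q n) * Cv" using B(3) unfolding b_def .
    moreover have "0 \<le> (\<integral>y. \<bar>b n y\<bar> \<partial>lborel)" by (rule Bochner_Integration.integral_nonneg) simp
    ultimately have "(\<integral>x. \<bar>a n x\<bar> \<partial>lborel) * (\<integral>y. \<bar>b n y\<bar> \<partial>lborel)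
        \<le> (\<bar>lancaster_coeff rho n\<bar> * (sup_on al1 om1 (P n) * Cu)) * (sup_on al2 om2 (Q n) * Cv)"
      by (intro mult_mono) linarith+
    then show ?thesis by (simp add: mult_ac)
  qed
  then show "summable (\<lambda>n. (\<integral>x. \<bar>a n x\<bar> \<partial>lborel) * (\<integral>y. \<bar>b n y\<bar> \<partial>lborel))"
    by (intro summable_comparison_test'[OF summable_mult2[OF weight_summable]])
      (auto intro!: mult_nonneg_nonneg)
qed

text \<open>The key formula: for \<open>u, v\<close> bounded on the supports,
  \<open>E[u(X) v(Y)] = \<Sum>\<^sub>n r\<^sub>n \<langle>u, P\<^sub>n\<rangle>\<^sub>f\<^sub>1 \<langle>v, Q\<^sub>n\<rangle>\<^sub>f\<^sub>2\<close>, obtained by integrating the Lancaster series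
  termwise over the plane.\<close>
lemma product_moment_expansion:
  fixes M :: "'a measure" and X Y :: "'a \<Rightarrow> real" and u v :: "real \<Rightarrow> real"
  assumes dist: "distributed M (lborel \<Otimes>\<^sub>M lborel) (\<lambda>w. (X w, Y w))
      (\<lambda>(x, y). ennreal (biv_density f1 f2 al1 om1 al2 om2 P Q rho x y))"
    and um: "u \<in> borel_measurable borel" and vm: "v \<in> borel_measurable borel"
    and ub: "\<And>x. x \<in> {al1..om1} \<Longrightarrow> \<bar>u x\<bar> \<le> Cu"
    and vb: "\<And>y. y \<in> {al2..om2} \<Longrightarrow> \<bar>v y\<bar> \<le> Cv"
  shows "integrable M (\<lambda>w. u (X w) * v (Y w))"
    and "(\<integral>w. u (X w) * v (Y w) \<partial>M) = (\<Sum>n. lancaster_coeff rho n *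
      (\<integral>x. f1 x * (poly (P n) x * u x) \<partial>lborel) * (\<integral>y. f2 y * (poly (Q n) y * v y) \<partial>lborel))"
proof -
  define F where "F z = biv_density f1 f2 al1 om1 al2 om2 P Q rho (fst z) (snd z)" for z
  define a where "a n x = lancaster_coeff rho n * (f1 x * (poly (P n) x * u x))" for n x
  define b where "b n y = f2 y * (poly (Q n) y * v y)" for n y
  have distF: "distributed M (lborel \<Otimes>\<^sub>M lborel) (\<lambda>w. (X w, Y w)) (\<lambda>z. ennreal (F z))"
    using dist by (simp add: F_def case_prod_beta')
  have ia: "integrable lborel (a n)" for n
    using density_poly_times_bounded(1)[OF d1 um ub] unfolding a_def by simp
  have ib: "integrable lborel (b n)" for n
    using density_poly_times_bounded(1)[OF d2 vm vb] unfolding b_def by simp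
  note tensor = lborel_pair.integral_suminf_tensor[OF ia ib
      product_series_dominated[OF um vm ub vb, folded a_def b_def]]
  have density: "F z * (u (fst z) * v (snd z)) = (\<Sum>n. a n (fst z) * b n (snd z))" for z
    unfolding F_def a_def b_def by (rule biv_density_times_product)
  have uv: "(\<lambda>z. u (fst z) * v (snd z)) \<in> borel_measurable (lborel \<Otimes>\<^sub>M lborel)"
    using um vm by measurable
  have F0: "0 \<le> F z" for z unfolding F_def by (rule biv_density_nonneg)
  show "integrable M (\<lambda>w. u (X w) * v (Y w))"
    using distributed_integrable[OF distF uv] F0 tensor(1) unfolding density by simp
  show "(\<integral>w. u (X w) * v (Y w) \<partial>M) = (\<Sum>n. lancaster_coeff rho n *
      (\<integral>x. f1 x * (poly (P n) x * u x) \<partial>lborel) * (\<integral>y. f2 y * (poly (Q n) y * v y) \<partial>lborel))"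
    using distributed_integral[OF distF uv] F0 tensor(2) unfolding density
    by (simp add: a_def b_def)
qed

lemma distributed_swapped:
  fixes M :: "'a measure" and X Y :: "'a \<Rightarrow> real"
  assumes M: "prob_space M"
    and dist: "distributed M (lborel \<Otimes>\<^sub>M lborel) (\<lambda>w. (X w, Y w))
      (\<lambda>(x, y). ennreal (biv_density f1 f2 al1 om1 al2 om2 P Q rho x y))"
  shows "distributed M (lborel \<Otimes>\<^sub>M lborel) (\<lambda>w. (Y w, X w))
      (\<lambda>(y, x). ennreal (biv_density f2 f1 al2 om2 al1 om1 Q P rho y x))"
  using prob_space.distributed_swap[OF M sigma_finite_lborel sigma_finite_lborel dist]
  by (simp add: biv_density_swap case_prod_beta')

lemma expectation_poly_times:
  fixes M :: "'a measure" and X Y :: "'a \<Rightarrow> real" and v :: "real \<Rightarrow> real"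
  assumes dist: "distributed M (lborel \<Otimes>\<^sub>M lborel) (\<lambda>w. (X w, Y w))
      (\<lambda>(x, y). ennreal (biv_density f1 f2 al1 om1 al2 om2 P Q rho x y))"
    and vm: "v \<in> borel_measurable borel" and vb: "\<And>y. y \<in> {al2..om2} \<Longrightarrow> \<bar>v y\<bar> \<le> C"
  shows "integrable M (\<lambda>w. poly (P j) (X w) * v (Y w))"
    and "(\<integral>w. poly (P j) (X w) * v (Y w) \<partial>M) =
      lancaster_coeff rho j * (\<integral>y. f2 y * (poly (Q j) y * v y) \<partial>lborel)"
proof -
  note expansion =
    product_moment_expansion[OF dist borel_measurable_poly vm sup_on_ge[where p = "P j"] vb]
  show "integrable M (\<lambda>w. poly (P j) (X w) * v (Y w))" by (rule expansion(1))
  have "(\<lambda>n. lancaster_coeff rho n * (\<integral>x. f1 x * (poly (P n) x * poly (P j) x) \<partial>lborel) *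
        (\<integral>y. f2 y * (poly (Q n) y * v y) \<partial>lborel))
      = (\<lambda>n. if n = j then lancaster_coeff rho j * (\<integral>y. f2 y * (poly (Q j) y * v y) \<partial>lborel) else 0)"
    by (simp add: orthonormal_polysD(2)[OF o1] fun_eq_iff)
  then show "(\<integral>w. poly (P j) (X w) * v (Y w) \<partial>M) =
      lancaster_coeff rho j * (\<integral>y. f2 y * (poly (Q j) y * v y) \<partial>lborel)"
    using expansion(2)
      sums_unique[OF sums_single[of j "\<lambda>_. lancaster_coeff rho j * (\<integral>y. f2 y * (poly (Q j) y * v y) \<partial>lborel)"]]
    by simp
qed

lemma polynomial_moments:
  fixes M :: "'a measure" and X Y :: "'a \<Rightarrow> real"
  assumes dist: "distributed M (lborel \<Otimes>\<^sub>M lborel) (\<lambda>w. (X w, Y w))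
      (\<lambda>(x, y). ennreal (biv_density f1 f2 al1 om1 al2 om2 P Q rho x y))"
  shows "integrable M (\<lambda>w. poly (P j) (X w) * poly (Q k) (Y w))"
    and "(\<integral>w. poly (P j) (X w) * poly (Q k) (Y w) \<partial>M) = (if j = k then lancaster_coeff rho j else 0)"
    and "integrable M (\<lambda>w. poly (Q j) (Y w) * poly (Q k) (Y w))"
    and "(\<integral>w. poly (Q j) (Y w) * poly (Q k) (Y w) \<partial>M) = (if j = k then 1 else 0)"
proof -
  note E = expectation_poly_times[OF dist borel_measurable_poly sup_on_ge[where p = "Q k"]]
  show "integrable M (\<lambda>w. poly (P j) (X w) * poly (Q k) (Y w))" by (rule E(1))
  show "(\<integral>w. poly (P j) (X w) * poly (Q k) (Y w) \<partial>M) = (if j = k then lancaster_coeff rho j else 0)"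
    using E(2) by (simp add: orthonormal_polysD(2)[OF o2])
  have QQ: "\<bar>poly (Q j) y * poly (Q k) y\<bar> \<le> sup_on al2 om2 (Q j) * sup_on al2 om2 (Q k)"
    if "y \<in> {al2..om2}" for y
    using poly_times_bounded[OF that sup_on_ge[OF that]] .
  note E0 = expectation_poly_times[OF dist
      borel_measurable_times[OF borel_measurable_poly borel_measurable_poly] QQ, where j = 0]
  show "integrable M (\<lambda>w. poly (Q j) (Y w) * poly (Q k) (Y w))"
    using E0(1) by (simp add: orthonormal_poly_0[OF o1 d1])
  show "(\<integral>w. poly (Q j) (Y w) * poly (Q k) (Y w) \<partial>M) = (if j = k then 1 else 0)"
    using E0(2) by (simp add: orthonormal_poly_0[OF o1 d1] orthonormal_poly_0[OF o2 d2]
        lancaster_coeff_def orthonormal_polysD(2)[OF o2])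
qed

lemma expectation_Y:
  fixes M :: "'a measure" and X Y :: "'a \<Rightarrow> real" and v :: "real \<Rightarrow> real"
  assumes dist: "distributed M (lborel \<Otimes>\<^sub>M lborel) (\<lambda>w. (X w, Y w))
      (\<lambda>(x, y). ennreal (biv_density f1 f2 al1 om1 al2 om2 P Q rho x y))"
    and vm: "v \<in> borel_measurable borel" and vb: "\<And>y. y \<in> {al2..om2} \<Longrightarrow> \<bar>v y\<bar> \<le> C"
  shows "integrable M (\<lambda>w. v (Y w))" and "(\<integral>w. v (Y w) \<partial>M) = (\<integral>y. f2 y * v y \<partial>lborel)"
  using expectation_poly_times[OF dist vm vb, where j = 0]
  by (simp_all add: orthonormal_poly_0[OF o1 d1] orthonormal_poly_0[OF o2 d2] lancaster_coeff_def)

text \<open>Since \<open>x = (P\<^sub>1(x) - p\<^sub>0)/p\<^sub>1\<close>, testing \<open>X\<close> against functions of \<open>Y\<close> involves only the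
  terms \<open>n = 0, 1\<close>: \<open>E[X v(Y)] = \<integral> f\<^sub>2(y) (\<rho>\<^sub>1 Q\<^sub>1(y) - p\<^sub>0)/p\<^sub>1 v(y) dy\<close>.\<close>
lemma expectation_X_times:
  fixes M :: "'a measure" and X Y :: "'a \<Rightarrow> real" and v :: "real \<Rightarrow> real"
  assumes dist: "distributed M (lborel \<Otimes>\<^sub>M lborel) (\<lambda>w. (X w, Y w))
      (\<lambda>(x, y). ennreal (biv_density f1 f2 al1 om1 al2 om2 P Q rho x y))"
    and vm: "v \<in> borel_measurable borel" and vb: "\<And>y. y \<in> {al2..om2} \<Longrightarrow> \<bar>v y\<bar> \<le> C"
  shows "integrable M (\<lambda>w. X w * v (Y w))"
    and "(\<integral>w. X w * v (Y w) \<partial>M) =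
      (\<integral>y. f2 y * ((rho 1 * poly (Q 1) y - coeff (P 1) 0) / coeff (P 1) 1 * v y) \<partial>lborel)"
proof -
  define p0 p1 where "p0 = coeff (P 1) 0" and "p1 = coeff (P 1) 1"
  have p1: "0 < p1" unfolding p1_def by (rule orthonormal_poly_1(2)[OF o1])
  have P0: "poly (P 0) x = 1" and Q0: "poly (Q 0) x = 1" for x
    using orthonormal_poly_0[OF o1 d1] orthonormal_poly_0[OF o2 d2] by blast+
  note E = expectation_poly_times[OF dist vm vb]
  have P1: "poly (P 1) x = p0 + p1 * x" for x unfolding p0_def p1_def by (rule orthonormal_poly_1(1)[OF o1])
  have X: "X w * v (Y w) = (1 / p1) * (poly (P 1) (X w) * v (Y w)) - (p0 / p1) * (poly (P 0) (X w) * v (Y w))"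
    for w
    unfolding P0 P1 using p1 by (simp add: field_simps)
  show "integrable M (\<lambda>w. X w * v (Y w))" unfolding X using E(1) by simp
  have "(\<integral>w. X w * v (Y w) \<partial>M) =
      (1 / p1) * (\<integral>w. poly (P 1) (X w) * v (Y w) \<partial>M) - (p0 / p1) * (\<integral>w. poly (P 0) (X w) * v (Y w) \<partial>M)"
    unfolding X using E(1) by simp
  also have "\<dots> = (1 / p1) * (rho 1 * (\<integral>y. f2 y * (poly (Q 1) y * v y) \<partial>lborel))
      - (p0 / p1) * (\<integral>y. f2 y * v y \<partial>lborel)"
    using E(2) by (simp add: lancaster_coeff_def Q0)
  also have "\<dots> = (\<integral>y. (rho 1 / p1) * (f2 y * (poly (Q 1) y * v y)) - (p0 / p1) * (f2 y * v y) \<partial>lborel)"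
    using density_poly_times_bounded(1)[OF d2 vm vb] bounded_times_density(1)[OF d2 vm vb] by simp
  also have "\<dots> = (\<integral>y. f2 y * ((rho 1 * poly (Q 1) y - p0) / p1 * v y) \<partial>lborel)"
    using p1 by (intro Bochner_Integration.integral_cong) (simp_all add: field_simps)
  finally show "(\<integral>w. X w * v (Y w) \<partial>M) =
      (\<integral>y. f2 y * ((rho 1 * poly (Q 1) y - coeff (P 1) 0) / coeff (P 1) 1 * v y) \<partial>lborel)"
    unfolding p0_def p1_def .
qed

lemma regression_X_on_Y:
  fixes M :: "'a measure" and X Y :: "'a \<Rightarrow> real"
  assumes M: "prob_space M"
    and dist: "distributed M (lborel \<Otimes>\<^sub>M lborel) (\<lambda>w. (X w, Y w))
      (\<lambda>(x, y). ennreal (biv_density f1 f2 al1 om1 al2 om2 P Q rho x y))"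
  shows "AE w in M. real_cond_exp M (vimage_algebra (space M) Y borel) X w =
    (rho 1 * coeff (Q 1) 1 / coeff (P 1) 1) * Y w + (rho 1 * coeff (Q 1) 0 - coeff (P 1) 0) / coeff (P 1) 1"
proof -
  define R where "R = smult (rho 1 / coeff (P 1) 1) (Q 1) - [:coeff (P 1) 0 / coeff (P 1) 1:]"
  have p1: "0 < coeff (P 1) 1" by (rule orthonormal_poly_1(2)[OF o1])
  have R: "poly R y = (rho 1 * poly (Q 1) y - coeff (P 1) 0) / coeff (P 1) 1" for y
    using p1 by (simp add: R_def field_simps)
  have R_affine: "poly R y =
      (rho 1 * coeff (Q 1) 1 / coeff (P 1) 1) * y + (rho 1 * coeff (Q 1) 0 - coeff (P 1) 0) / coeff (P 1) 1"
    for y unfolding R orthonormal_poly_1(1)[OF o2] using p1 by (simp add: field_simps)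
  have Ym: "Y \<in> borel_measurable M"
    using distributed_measurable[OF dist] unfolding measurable_pair_iff by (simp add: comp_def)
  have one: "\<bar>1 :: real\<bar> \<le> 1" by simp
  have iX: "integrable M X" using expectation_X_times(1)[OF dist borel_measurable_const one] by simp
  have iR: "integrable M (\<lambda>w. poly R (Y w))"
    by (rule expectation_Y(1)[OF dist borel_measurable_poly sup_on_ge])
  have "(\<integral>w. X w * indicator B (Y w) \<partial>M) = (\<integral>w. poly R (Y w) * indicator B (Y w) \<partial>M)"
    if B: "B \<in> sets borel" for B
  proof -
    have Bm: "indicator B \<in> borel_measurable borel" using B by simp
    have Bb: "\<bar>indicator B y :: real\<bar> \<le> 1" for y by (simp add: indicator_def)
    have RB: "\<bar>poly R y * indicator B y\<bar> \<le> sup_on al2 om2 R * 1" if "y \<in> {al2..om2}" for y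
      by (rule poly_times_bounded[OF that Bb])
    have "(\<integral>w. X w * indicator B (Y w) \<partial>M) = (\<integral>y. f2 y * (poly R y * indicator B y) \<partial>lborel)"
      using expectation_X_times(2)[OF dist Bm Bb] by (simp only: R)
    also have "\<dots> = (\<integral>w. poly R (Y w) * indicator B (Y w) \<partial>M)"
      by (rule expectation_Y(2)[OF dist borel_measurable_times[OF borel_measurable_poly Bm] RB, symmetric])
    finally show ?thesis .
  qed
  from real_cond_exp_by_test_sets[OF M Ym borel_measurable_poly iX iR this]
  show ?thesis unfolding R_affine .
qed

text \<open>The Pearson correlation of \<open>(X, Y)\<close> is \<open>\<rho>\<^sub>1\<close>: \<open>X\<close> and \<open>Y\<close> are increasing affine images of
  the standardized variables \<open>P\<^sub>1(X)\<close> and \<open>Q\<^sub>1(Y)\<close>, whose covariance is \<open>\<rho>\<^sub>1\<close>.\<close>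
lemma pcorr_eq_rho_1:
  fixes M :: "'a measure" and X Y :: "'a \<Rightarrow> real"
  assumes M: "prob_space M"
    and dist: "distributed M (lborel \<Otimes>\<^sub>M lborel) (\<lambda>w. (X w, Y w))
      (\<lambda>(x, y). ennreal (biv_density f1 f2 al1 om1 al2 om2 P Q rho x y))"
  shows "pcorr M X Y = rho 1"
proof -
  interpret swapped: lancaster_model f2 f1 al2 om2 al1 om1 Q P rho by (rule swap)
  define U V where "U = (\<lambda>w. poly (P 1) (X w))" and "V = (\<lambda>w. poly (Q 1) (Y w))"
  define p0 p1 q0 q1 where "p0 = coeff (P 1) 0" and "p1 = coeff (P 1) 1"
    and "q0 = coeff (Q 1) 0" and "q1 = coeff (Q 1) 1"
  have p1: "0 < p1" and q1: "0 < q1"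
    unfolding p1_def q1_def by (rule orthonormal_poly_1(2)[OF o1], rule orthonormal_poly_1(2)[OF o2])
  have P1: "poly (P 1) x = p0 + p1 * x" and Q1: "poly (Q 1) x = q0 + q1 * x" for x
    unfolding p0_def p1_def q0_def q1_def
    by (rule orthonormal_poly_1(1)[OF o1], rule orthonormal_poly_1(1)[OF o2])
  have X: "X = (\<lambda>w. (1 / p1) * U w + - p0 / p1)" and Y: "Y = (\<lambda>w. (1 / q1) * V w + - q0 / q1)"
    unfolding U_def V_def P1 Q1 using p1 q1 by (simp_all add: fun_eq_iff field_simps)
  note PQ = polynomial_moments[OF dist] and QP = swapped.polynomial_moments[OF distributed_swapped[OF M dist]]
  have P0: "poly (P 0) x = 1" and Q0: "poly (Q 0) x = 1" for x
    using orthonormal_poly_0[OF o1 d1] orthonormal_poly_0[OF o2 d2] by blast+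
  have iU: "integrable M U" and EU: "(\<integral>w. U w \<partial>M) = 0"
    using PQ(1,2)[of 1 0] by (simp_all add: U_def Q0)
  have iV: "integrable M V" and EV: "(\<integral>w. V w \<partial>M) = 0"
    using PQ(1,2)[of 0 1] by (simp_all add: V_def P0)
  have "(\<integral>w. (U w)\<^sup>2 \<partial>M) = 1" and "(\<integral>w. (V w)\<^sup>2 \<partial>M) = 1"
    using QP(4)[of 1 1] PQ(4)[of 1 1] by (simp_all add: U_def V_def power2_eq_square)
  moreover have "(\<integral>w. U w * V w \<partial>M) = rho 1"
    using PQ(2)[of 1 1] by (simp add: U_def V_def lancaster_coeff_def)
  ultimately have "pcorr M U V = rho 1"
    using pcorr_centered[of M U V] EU EV by (simp add: mean_def)
  moreover have "pcorr M (\<lambda>w. (1 / p1) * U w + - p0 / p1) (\<lambda>w. (1 / q1) * V w + - q0 / q1) = pcorr M U V"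
    using p1 q1 by (intro pcorr_affine[OF M iU iV]) simp_all
  ultimately show ?thesis unfolding X Y by simp
qed

text \<open>Each \<open>\<bar>\<rho>\<^sub>m\<bar>\<close>, \<open>m \<ge> 1\<close>, is attained as the correlation of \<open>\<plusminus>P\<^sub>m(X)\<close> and \<open>Q\<^sub>m(Y)\<close>, hence
  bounds the maximal correlation from below.\<close>
lemma rho_le_maxcorr:
  fixes M :: "'a measure" and X Y :: "'a \<Rightarrow> real"
  assumes M: "prob_space M"
    and dist: "distributed M (lborel \<Otimes>\<^sub>M lborel) (\<lambda>w. (X w, Y w))
      (\<lambda>(x, y). ennreal (biv_density f1 f2 al1 om1 al2 om2 P Q rho x y))"
    and m: "m \<noteq> 0"
  shows "\<bar>rho m\<bar> \<le> maxcorr M X Y"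
proof -
  interpret swapped: lancaster_model f2 f1 al2 om2 al1 om1 Q P rho by (rule swap)
  have Xm: "X \<in> borel_measurable M" and Ym: "Y \<in> borel_measurable M"
    using distributed_measurable[OF dist] unfolding measurable_pair_iff by (simp_all add: comp_def)
  define s where "s = (if rho m < 0 then -1 else 1 :: real)"
  have s: "s * s = 1" "s * rho m = \<bar>rho m\<bar>" unfolding s_def by simp_all
  define g1 g2 where "g1 = (\<lambda>x. s * poly (P m) x)" and "g2 = (\<lambda>y. poly (Q m) y)"
  have g_meas: "g1 \<in> borel_measurable borel" "g2 \<in> borel_measurable borel"
    unfolding g1_def g2_def by (intro borel_measurable_times borel_measurable_const borel_measurable_poly)+
  note PQ = polynomial_moments[OF dist] and QP = swapped.polynomial_moments[OF distributed_swapped[OF M dist]]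
  have P0: "poly (P 0) x = 1" and Q0: "poly (Q 0) x = 1" for x
    using orthonormal_poly_0[OF o1 d1] orthonormal_poly_0[OF o2 d2] by blast+
  have mean1: "mean M (\<lambda>w. g1 (X w)) = 0" and mean2: "mean M (\<lambda>w. g2 (Y w)) = 0"
    using PQ(2)[of m 0] PQ(2)[of 0 m] m by (simp_all add: mean_def g1_def g2_def P0 Q0)
  have sq1: "(\<lambda>w. (g1 (X w))\<^sup>2) = (\<lambda>w. poly (P m) (X w) * poly (P m) (X w))"
    using s(1) by (simp add: fun_eq_iff g1_def power2_eq_square algebra_simps)
  have sq2: "(\<lambda>w. (g2 (Y w))\<^sup>2) = (\<lambda>w. poly (Q m) (Y w) * poly (Q m) (Y w))"
    by (simp add: fun_eq_iff g2_def power2_eq_square)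
  have var1: "var M (\<lambda>w. g1 (X w)) = 1" and var2: "var M (\<lambda>w. g2 (Y w)) = 1"
    unfolding var_def mean1 mean2 using sq1 sq2 QP(4)[of m m] PQ(4)[of m m] by simp_all
  have "g1 \<in> L2star M X" and "g2 \<in> L2star M Y"
    unfolding L2star_def using g_meas var1 var2 sq1 sq2 QP(3)[of m m] PQ(3)[of m m] by simp_all
  then have "pcorr M (\<lambda>w. g1 (X w)) (\<lambda>w. g2 (Y w)) \<le> maxcorr M X Y"
    using pcorr_le_maxcorr[OF M Xm Ym, of "(g1, g2)"] by simp
  moreover have "(\<integral>w. g1 (X w) * g2 (Y w) \<partial>M) = \<bar>rho m\<bar>"
    using PQ(2)[of m m] m s(2) by (simp add: g1_def g2_def lancaster_coeff_def mult.assoc)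
  then have "pcorr M (\<lambda>w. g1 (X w)) (\<lambda>w. g2 (Y w)) = \<bar>rho m\<bar>"
    by (simp add: pcorr_def covar_def mean1 mean2 var1 var2)
  ultimately show ?thesis by simp
qed

theorem linear_regressions_with_maxcorr_gap:
  fixes M :: "'a measure" and X Y :: "'a \<Rightarrow> real"
  assumes M: "prob_space M"
    and dist: "distributed M (lborel \<Otimes>\<^sub>M lborel) (\<lambda>w. (X w, Y w))
      (\<lambda>(x, y). ennreal (biv_density f1 f2 al1 om1 al2 om2 P Q rho x y))"
    and rho1: "0 < \<bar>rho 1\<bar>" and gap: "\<bar>rho 1\<bar> < (SUP n. \<bar>rho (n + 2)\<bar>)"
  shows "\<exists>a0 a1 b0 b1 :: real. a1 * b1 \<noteq> 0 \<and>
    (AE w in M. real_cond_exp M (vimage_algebra (space M) Y borel) X w = a1 * Y w + a0) \<and>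
    (AE w in M. real_cond_exp M (vimage_algebra (space M) X borel) Y w = b1 * X w + b0) \<and>
    maxcorr M X Y > \<bar>pcorr M X Y\<bar> \<and> \<bar>pcorr M X Y\<bar> > 0"
proof -
  interpret swapped: lancaster_model f2 f1 al2 om2 al1 om1 Q P rho by (rule swap)
  have "\<bar>rho (n + 2)\<bar> \<le> 1" for n using rho_bound[of "Suc n"] by (simp add: numeral_2_eq_2)
  then have "bdd_above (range (\<lambda>n. \<bar>rho (n + 2)\<bar>))" by (intro bdd_aboveI2)
  from less_cSUP_iff[OF _ this] gap obtain n where n: "\<bar>rho 1\<bar> < \<bar>rho (n + 2)\<bar>" by auto
  have "maxcorr M X Y > \<bar>pcorr M X Y\<bar>"
    using n rho_le_maxcorr[OF M dist, of "n + 2"] pcorr_eq_rho_1[OF M dist] by simp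
  moreover have "\<bar>pcorr M X Y\<bar> > 0" using rho1 pcorr_eq_rho_1[OF M dist] by simp
  moreover have "(rho 1 * coeff (Q 1) 1 / coeff (P 1) 1) * (rho 1 * coeff (P 1) 1 / coeff (Q 1) 1) \<noteq> 0"
    using rho1 orthonormal_poly_1(2)[OF o1] orthonormal_poly_1(2)[OF o2] by simp
  ultimately show ?thesis
    using regression_X_on_Y[OF M dist] swapped.regression_X_on_Y[OF M distributed_swapped[OF M dist]]
    by blast
qed

end

lemma admissible_example:
  assumes d1: "bdd_density f1 al1 om1" and d2: "bdd_density f2 al2 om2"
    and o1: "orthonormal_polys f1 P" and o2: "orthonormal_polys f2 Q"
  shows "\<exists>rho :: nat \<Rightarrow> real. admissible al1 om1 al2 om2 P Q rho \<and>
    0 < \<bar>rho 1\<bar> \<and> \<bar>rho 1\<bar> < (SUP n. \<bar>rho (n + 2)\<bar>)"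
proof -
  define c where "c n = sup_on al1 om1 (P n) * sup_on al2 om2 (Q n)" for n
  have c1: "1 \<le> c n" for n
    unfolding c_def using orthonormal_sup_ge_1[OF o1 d1, of n] orthonormal_sup_ge_1[OF o2 d2, of n]
    by (metis mult_mono' mult_1 zero_le_one)
  define lam where "lam = 1 / (c 1 + 2 * c 2)"
  have lam: "0 < lam" unfolding lam_def using c1[of 1] c1[of 2] by simp
  define rho where "rho n = (if n = 1 \<or> n = 2 then real n * lam else 0)" for n
  define T where "T n = \<bar>rho (Suc n)\<bar> * sup_on al1 om1 (P (Suc n)) * sup_on al2 om2 (Q (Suc n))" for n
  have T: "T = (\<lambda>n. if n \<in> {0, 1} then \<bar>rho (Suc n)\<bar> * c (Suc n) else 0)"
    by (auto simp: fun_eq_iff T_def rho_def c_def)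
  have "T sums (lam * c 1 + 2 * lam * c 2)"
    unfolding T using sums_If_finite_set[of "{0, 1 :: nat}" "\<lambda>n. \<bar>rho (Suc n)\<bar> * c (Suc n)"] lam
    by (simp add: rho_def numeral_2_eq_2)
  moreover have "lam * c 1 + 2 * lam * c 2 = lam * (c 1 + 2 * c 2)" by (simp add: algebra_simps)
  moreover have "lam * (c 1 + 2 * c 2) = 1" unfolding lam_def using c1[of 1] c1[of 2] by simp
  ultimately have "admissible al1 om1 al2 om2 P Q rho"
    unfolding admissible_def T_def[symmetric] by (simp add: sums_iff)
  moreover have "bdd_above (range (\<lambda>n. \<bar>rho (n + 2)\<bar>))"
    using lam by (intro bdd_aboveI2[of _ _ "2 * lam"]) (simp add: rho_def)
  then have "\<bar>rho 1\<bar> < (SUP n. \<bar>rho (n + 2)\<bar>)"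
    using cSUP_upper[of 0 UNIV "\<lambda>n. \<bar>rho (n + 2)\<bar>"] lam by (simp add: rho_def)
  moreover have "0 < \<bar>rho 1\<bar>" using lam by (simp add: rho_def)
  ultimately show ?thesis by blast
qed

theorem mainTheorem4:
  fixes f1 f2 :: "real \<Rightarrow> real" and al1 om1 al2 om2 :: real
    and P Q :: "nat \<Rightarrow> real poly"
  assumes d1: "bdd_density f1 al1 om1" and d2: "bdd_density f2 al2 om2"
    and o1: "orthonormal_polys f1 P" and o2: "orthonormal_polys f2 Q"
  shows
   "(\<forall>rho :: nat \<Rightarrow> real.
       admissible al1 om1 al2 om2 P Q rho \<and>
       0 < \<bar>rho 1\<bar> \<and> \<bar>rho 1\<bar> < (SUP n. \<bar>rho (n + 2)\<bar>) \<longrightarrow>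
       (\<forall>(M :: 'a measure) (X :: 'a \<Rightarrow> real) (Y :: 'a \<Rightarrow> real).
          prob_space M \<and>
          distributed M (lborel \<Otimes>\<^sub>M lborel) (\<lambda>w. (X w, Y w))
            (\<lambda>(x, y). ennreal (biv_density f1 f2 al1 om1 al2 om2 P Q rho x y)) \<longrightarrow>
          (\<exists>a0 a1 b0 b1 :: real. a1 * b1 \<noteq> 0 \<and>
             (AE w in M. real_cond_exp M (vimage_algebra (space M) Y borel) X w = a1 * Y w + a0) \<and>
             (AE w in M. real_cond_exp M (vimage_algebra (space M) X borel) Y w = b1 * X w + b0) \<and>
             maxcorr M X Y > \<bar>pcorr M X Y\<bar> \<and> \<bar>pcorr M X Y\<bar> > 0)))
    \<and> (\<exists>rho :: nat \<Rightarrow> real. admissible al1 om1 al2 om2 P Q rho \<and>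
          0 < \<bar>rho 1\<bar> \<and> \<bar>rho 1\<bar> < (SUP n. \<bar>rho (n + 2)\<bar>))"
proof (intro conjI allI impI; (elim conjE)?)
  fix rho :: "nat \<Rightarrow> real" and M :: "'a measure" and X Y :: "'a \<Rightarrow> real"
  assume "admissible al1 om1 al2 om2 P Q rho" "0 < \<bar>rho 1\<bar>" "\<bar>rho 1\<bar> < (SUP n. \<bar>rho (n + 2)\<bar>)"
    and "prob_space M" "distributed M (lborel \<Otimes>\<^sub>M lborel) (\<lambda>w. (X w, Y w))
      (\<lambda>(x, y). ennreal (biv_density f1 f2 al1 om1 al2 om2 P Q rho x y))"
  with d1 d2 o1 o2 show "\<exists>a0 a1 b0 b1 :: real. a1 * b1 \<noteq> 0 \<and>
      (AE w in M. real_cond_exp M (vimage_algebra (space M) Y borel) X w = a1 * Y w + a0) \<and>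
      (AE w in M. real_cond_exp M (vimage_algebra (space M) X borel) Y w = b1 * X w + b0) \<and>
      maxcorr M X Y > \<bar>pcorr M X Y\<bar> \<and> \<bar>pcorr M X Y\<bar> > 0"
    by (intro lancaster_model.linear_regressions_with_maxcorr_gap lancaster_model.intro)
next
  show "\<exists>rho :: nat \<Rightarrow> real. admissible al1 om1 al2 om2 P Q rho \<and>
      0 < \<bar>rho 1\<bar> \<and> \<bar>rho 1\<bar> < (SUP n. \<bar>rho (n + 2)\<bar>)"
    by (rule admissible_example[OF d1 d2 o1 o2])
qed

end
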